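(* Let $r\ge 2$ be an integer and let $\varphi$ be a discrete kernel and $\psi$ a continuous kernel such that conditions (i) and (ii) hold for this $r$, and both $\varphi$ and $\psi$ satisfy condition $(\Theta)$ with some $\theta>r+1$. Then there exists a constant $\Lambda_\infty>0$ such that for every $f\in C(\mathbb{R})$, \[ \|\mathcal{D}_w^{\varphi,\psi}f-f\|_\infty\le \Lambda_\infty\,\omega_r\!\left(f,\tfrac{1}{w}\right)_\infty,\qquad w>0. \]
   Context: $C(\mathbb{R})$ is the space of bounded, uniformly continuous functions $f:\mathbb{R}\to\mathbb{R}$ with the sup-norm $\|\cdot\|_\infty$. A discrete kernel is a bounded function $\varphi\in L^1(\mathbb{R})$ with $\sum_{k\in\mathbb{Z}}\varphi(u-k)=1$ for all $u\in\mathbb{R}$. A continuous kernel is a function $\psi\in L^1(\mathbb{R})$, bounded in a neighbourhood of $0$, with $\int_{\mathbb{R}}\psi(u)\,du=1$. Moments: - discrete algebraic moments: $m_\nu(\varphi,u)=\sum_{k\in\mathbb{Z}}\varphi(u-k)(k-u)^\nu$; - continuous algebraic moments: $\widetilde m_\nu(\psi)=\int_{\mathbb{R}}u^\nu\psi(u)\,du$. Durrmeyer sampling operators: \[ (\mathcal{D}_w^{\varphi,\psi}f)(x)=\sum_{k\in\mathbb{Z}}\varphi(wx-k)\,w\int_{\mathbb{R}}\psi(wu-k)f(u)\,du,\qquad x\in\mathbb{R},\ w>0. \] Conditions: - (i): for every $\nu=1,\dots,r$, $m_\nu(\varphi,u)$ is independent of $u\in\mathbb{R}$; it is then written $m_\nu(\varphi)$,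 and $m_0(\varphi)=1$. - (ii): for every $i=1,\dots,r-1$, $\sum_{\nu=0}^{i}\binom{i}{\nu}m_{i-\nu}(\varphi)\widetilde m_\nu(\psi)=0$. - $(\Theta)$ with $\theta>0$: a function $\xi$ satisfies it if $\xi(u)=\mathcal{O}(|u|^{-\theta})$ as $|u|\to+\infty$. The $r$-th order modulus of smoothness is $\omega_r(f,\delta)_p=\sup_{|t|\le\delta}\|\Delta_t^r(f,\cdot)\|_p$, where $\Delta_t^r(f,x)=\sum_{j=0}^r\binom{r}{j}(-1)^{r-j}f(x+jt)$. *)

theory Defs
  imports "HOL-Analysis.Analysis"
begin

text \<open>C(R): bounded, uniformly continuous real functions.\<close>
definition bucont :: "(real \<Rightarrow> real) set" where
  "bucont = {f. bounded (range f) \<and> uniformly_continuous_on UNIV f}"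

definition sup_norm :: "(real \<Rightarrow> real) \<Rightarrow> real" where
  "sup_norm g = (SUP x. \<bar>g x\<bar>)"

definition discrete_kernel :: "(real \<Rightarrow> real) \<Rightarrow> bool" where
  "discrete_kernel \<phi> \<longleftrightarrow> bounded (range \<phi>) \<and> integrable lborel \<phi> \<and>
     (\<forall>u. ((\<lambda>k::int. \<phi> (u - of_int k)) has_sum 1) UNIV)"

definition continuous_kernel :: "(real \<Rightarrow> real) \<Rightarrow> bool" where
  "continuous_kernel \<psi> \<longleftrightarrow> integrable lborel \<psi> \<and>
     (\<exists>\<delta>>0. \<exists>M. \<forall>u. \<bar>u\<bar> < \<delta> \<longrightarrow> \<bar>\<psi> u\<bar> \<le> M) \<and>
     (LINT u|lborel. \<psi> u) = 1"

definition disc_moment :: "(real \<Rightarrow> real) \<Rightarrow> nat \<Rightarrow> real \<Rightarrow> real" where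
  "disc_moment \<phi> \<nu> u = (\<Sum>\<^sub>\<infinity>k::int. \<phi> (u - of_int k) * (of_int k - u) ^ \<nu>)"

definition cont_moment :: "(real \<Rightarrow> real) \<Rightarrow> nat \<Rightarrow> real" where
  "cont_moment \<psi> \<nu> = (LINT u|lborel. u ^ \<nu> * \<psi> u)"

definition cond_i :: "nat \<Rightarrow> (real \<Rightarrow> real) \<Rightarrow> bool" where
  "cond_i r \<phi> \<longleftrightarrow> (\<forall>\<nu>\<in>{1..r}. \<forall>u. disc_moment \<phi> \<nu> u = disc_moment \<phi> \<nu> 0)"

definition disc_moment_const :: "(real \<Rightarrow> real) \<Rightarrow> nat \<Rightarrow> real" where
  "disc_moment_const \<phi> \<nu> = (if \<nu> = 0 then 1 else disc_moment \<phi> \<nu> 0)"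

definition cond_ii :: "nat \<Rightarrow> (real \<Rightarrow> real) \<Rightarrow> (real \<Rightarrow> real) \<Rightarrow> bool" where
  "cond_ii r \<phi> \<psi> \<longleftrightarrow> (\<forall>i\<in>{1..r-1}.
     (\<Sum>\<nu>=0..i. real (i choose \<nu>) * disc_moment_const \<phi> (i - \<nu>) * cont_moment \<psi> \<nu>) = 0)"

definition cond_Theta :: "real \<Rightarrow> (real \<Rightarrow> real) \<Rightarrow> bool" where
  "cond_Theta \<theta> \<xi> \<longleftrightarrow> (\<exists>C M. \<forall>u. \<bar>u\<bar> > M \<longrightarrow> \<bar>\<xi> u\<bar> \<le> C * \<bar>u\<bar> powr (- \<theta>))"

definition durrmeyer :: "(real \<Rightarrow> real) \<Rightarrow> (real \<Rightarrow> real) \<Rightarrow> real \<Rightarrow> (real \<Rightarrow> real) \<Rightarrow> real \<Rightarrow> real" where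
  "durrmeyer \<phi> \<psi> w f x =
     (\<Sum>\<^sub>\<infinity>k::int. \<phi> (w * x - of_int k) * (w * (LINT u|lborel. \<psi> (w * u - of_int k) * f u)))"

definition fdiff :: "nat \<Rightarrow> real \<Rightarrow> (real \<Rightarrow> real) \<Rightarrow> real \<Rightarrow> real" where
  "fdiff r t f x = (\<Sum>j=0..r. real (r choose j) * (-1) ^ (r - j) * f (x + real j * t))"

definition modsmooth :: "nat \<Rightarrow> (real \<Rightarrow> real) \<Rightarrow> real \<Rightarrow> real" where
  "modsmooth r f \<delta> = (SUP t\<in>{t. \<bar>t\<bar> \<le> \<delta>}. sup_norm (fdiff r t f))"

end

theory Submission
  imports Defs "HOL-Real_Asymp.Real_Asymp"
begin

text \<open>
  The error is split with the Steklov means \<open>A\<^sub>s G y = \<integral>\<^sub>0\<^sup>1 G (y + s \<tau>) d\<tau>\<close>.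
  For \<open>s = 1/(r w)\<close> the combination \<open>e = \<Sum>\<^sub>j (-1)\<^sup>r\<^sup>-\<^sup>j (r choose j) A\<^bsub>js\<^esub>\<^sup>r f\<close> contains \<open>f\<close>
  (the term \<open>j = 0\<close>) and is an average of \<open>r\<close>-th differences of \<open>f\<close>, hence bounded by
  \<open>\<omega>\<^sub>r(f, 1/w)\<close>; the other terms \<open>g\<^sub>j = A\<^bsub>js\<^esub>\<^sup>r f\<close> have \<open>r\<close>-th derivative
  \<open>\<Delta>\<^bsub>js\<^esub>\<^sup>r f / (js)\<^sup>r\<close>, so they deviate from their Taylor polynomials of degree \<open>r - 1\<close> by
  \<open>O(w\<^sup>r \<omega>\<^sub>r(f, 1/w) |y - x|\<^sup>r)\<close>.  Conditions (i) and (ii) say exactly that the operator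
  reproduces polynomials of degree \<open>< r\<close> at the point \<open>x\<close>, and the decay \<open>(\<Theta>)\<close> makes
  the \<open>r\<close>-th absolute moments of both kernels finite, which controls the operator on
  \<open>|y - x|\<^sup>r\<close> by \<open>w\<^sup>-\<^sup>r\<close>.
\<close>

section \<open>Finite differences and Steklov means\<close>

lemma fdiff_Suc:
  "fdiff (Suc n) t F x = fdiff n t F (x + t) - fdiff n t F x"
proof -
  have shifted: "fdiff n t F (x + t) =
      (\<Sum>j=1..Suc n. real (n choose (j - 1)) * (-1) ^ (Suc n - j) * F (x + real j * t))"
    unfolding fdiff_def
    by (rule sum.reindex_bij_witness[where i="\<lambda>j. j - 1" and j="\<lambda>j. Suc j"])
       (auto simp: algebra_simps)
  have "fdiff (Suc n) t F x = (\<Sum>j=0..Suc n. (real (n choose (j - 1)) * (if j = 0 then 0 else 1)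
      + real (n choose j)) * (-1) ^ (Suc n - j) * F (x + real j * t))"
    unfolding fdiff_def
  proof (rule sum.cong[OF refl])
    fix j
    show "real (Suc n choose j) * (-1) ^ (Suc n - j) * F (x + real j * t) =
      (real (n choose (j - 1)) * (if j = 0 then 0 else 1) + real (n choose j))
        * (-1) ^ (Suc n - j) * F (x + real j * t)"
      by (cases j) (auto simp: binomial_Suc_Suc)
  qed
  also have "\<dots> = (\<Sum>j=0..Suc n. real (n choose (j - 1)) * (if j = 0 then 0 else 1)
        * (-1) ^ (Suc n - j) * F (x + real j * t))
      + (\<Sum>j=0..Suc n. real (n choose j) * (-1) ^ (Suc n - j) * F (x + real j * t))"
    by (simp add: sum.distrib algebra_simps)
  also have "(\<Sum>j=0..Suc n. real (n choose (j - 1)) * (if j = 0 then 0 else 1)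
        * (-1) ^ (Suc n - j) * F (x + real j * t)) = fdiff n t F (x + t)"
    unfolding shifted by (simp add: sum.atLeast_Suc_atMost)
  also have "(\<Sum>j=0..Suc n. real (n choose j) * (-1) ^ (Suc n - j) * F (x + real j * t))
      = - fdiff n t F x"
  proof -
    have "(\<Sum>j=0..Suc n. real (n choose j) * (-1) ^ (Suc n - j) * F (x + real j * t))
        = (\<Sum>j=0..n. real (n choose j) * (-1) ^ (Suc n - j) * F (x + real j * t))"
      by simp
    also have "\<dots> = (\<Sum>j=0..n. - (real (n choose j) * (-1) ^ (n - j) * F (x + real j * t)))"
      by (rule sum.cong) (auto simp: Suc_diff_le)
    finally show ?thesis by (simp add: fdiff_def sum_negf)
  qed
  finally show ?thesis by simp
qed

lemma continuous_on_fdiff_step: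
  assumes "continuous_on UNIV f"
  shows "continuous_on UNIV (\<lambda>t. fdiff r t f x)"
  unfolding fdiff_def by (intro continuous_intros continuous_on_compose2[OF assms]) auto

lemma abs_fdiff_le:
  assumes "\<And>y. \<bar>f y\<bar> \<le> B"
  shows "\<bar>fdiff r t f y\<bar> \<le> (\<Sum>j=0..r. real (r choose j) * B)"
  unfolding fdiff_def
proof (rule order_trans[OF sum_abs], rule sum_mono)
  fix j
  have "\<bar>real (r choose j) * (-1) ^ (r - j) * f (y + real j * t)\<bar>
      = real (r choose j) * \<bar>f (y + real j * t)\<bar>"
    by (simp add: abs_mult)
  also have "\<dots> \<le> real (r choose j) * B" by (rule mult_left_mono[OF assms]) simp
  finally show "\<bar>real (r choose j) * (-1) ^ (r - j) * f (y + real j * t)\<bar> \<le> real (r choose j) * B" .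
qed

lemma sup_norm_le:
  assumes "\<And>x. \<bar>g x\<bar> \<le> c"
  shows "bounded (range g)" and "sup_norm g \<le> c"
  using assms unfolding bounded_iff sup_norm_def by (auto intro: cSUP_least)

lemma abs_fdiff_le_modsmooth:
  assumes "\<And>y. \<bar>f y\<bar> \<le> B" and "\<bar>t\<bar> \<le> \<delta>"
  shows "\<bar>fdiff r t f y\<bar> \<le> modsmooth r f \<delta>"
proof -
  define FB where "FB = (\<Sum>j=0..r. real (r choose j) * B)"
  have fb: "\<bar>fdiff r t' f y'\<bar> \<le> FB" for t' y'
    unfolding FB_def by (rule abs_fdiff_le[OF assms(1)])
  have "\<bar>fdiff r t f y\<bar> \<le> sup_norm (fdiff r t f)"
    unfolding sup_norm_def by (rule cSUP_upper) (auto intro!: bdd_aboveI2[where M=FB] fb)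
  also have "\<dots> \<le> modsmooth r f \<delta>"
    unfolding modsmooth_def
    by (rule cSUP_upper) (use assms(2) sup_norm_le(2)[OF fb] in \<open>auto intro!: bdd_aboveI2[where M=FB]\<close>)
  finally show ?thesis .
qed

definition steklov :: "real \<Rightarrow> (real \<Rightarrow> real) \<Rightarrow> real \<Rightarrow> real" where
  "steklov s G y = integral {0..1} (\<lambda>\<tau>. G (y + s * \<tau>))"

definition diff_quot :: "real \<Rightarrow> (real \<Rightarrow> real) \<Rightarrow> real \<Rightarrow> real" where
  "diff_quot s G y = (G (y + s) - G y) / s"

lemma continuous_on_affine_comp:
  fixes A :: "real set"
  assumes "continuous_on UNIV G"
  shows "continuous_on A (\<lambda>\<tau>. G (y + s * \<tau>))"
  by (rule continuous_on_compose2[OF assms]) (auto intro!: continuous_intros)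

lemma steklov_iter_Suc:
  "(steklov s ^^ Suc n) G y = integral {0..1} (\<lambda>\<tau>. (steklov s ^^ n) G (y + s * \<tau>))"
  by (simp only: funpow.simps(2) comp_apply) (rule steklov_def)

lemma diff_quot_iter_Suc:
  "(diff_quot s ^^ Suc n) G y = ((diff_quot s ^^ n) G (y + s) - (diff_quot s ^^ n) G y) / s"
  by (simp only: funpow.simps(2) comp_apply) (rule diff_quot_def)

lemma steklov_eq_integral:
  assumes s: "s > 0" and G: "continuous_on UNIV G"
  shows "steklov s G y = integral {y..y+s} G / s"
proof -
  have "(G has_integral integral {y..y+s} G) (cbox y (y+s))"
    using G by (auto intro!: integrable_integral integrable_continuous_interval
        continuous_on_subset[OF G])
  from has_integral_affinity'[OF this s, of y]
  have "((\<lambda>\<tau>. G (s * \<tau> + y)) has_integral integral {y..y+s} G / s) {0..1}"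
    using s by (simp add: divide_simps)
  then show ?thesis unfolding steklov_def by (simp add: integral_unique add.commute)
qed

lemma steklov_has_real_derivative:
  assumes s: "s > 0" and G: "continuous_on UNIV G"
  shows "(steklov s G has_real_derivative diff_quot s G y0) (at y0)"
proof -
  define a where "a = y0 - 1"
  define I where "I u = integral {a..u} G" for u
  have dI: "(I has_real_derivative G u) (at u)" if "u \<in> {a<..<y0 + s + 1}" for u
  proof -
    have "(I has_real_derivative G u) (at u within {a..y0 + s + 1})"
      unfolding I_def using that
      by (intro integral_has_real_derivative continuous_on_subset[OF G]) auto
    then have "(I has_real_derivative G u) (at u within {a<..<y0 + s + 1})"
      by (rule DERIV_subset) auto
    then show ?thesis using that at_within_open[of u "{a<..<y0 + s + 1}"] by simp
  qed
  have "((\<lambda>y. I (y + s)) has_real_derivative G (y0 + s) * 1) (at y0)"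
    by (rule DERIV_chain2[OF dI]) (use s in \<open>auto intro!: derivative_eq_intros simp: a_def\<close>)
  moreover have "(I has_real_derivative G y0) (at y0)"
    using s by (intro dI) (auto simp: a_def)
  ultimately have d: "((\<lambda>y. (I (y + s) - I y) / s) has_real_derivative diff_quot s G y0) (at y0)"
    unfolding diff_quot_def by (intro DERIV_cdivide DERIV_diff[THEN DERIV_cong]) auto
  show ?thesis
  proof (rule has_field_derivative_transform_within_open[OF d, of "{y0-1<..<y0+1}"])
    fix y assume y: "y \<in> {y0-1<..<y0+1}"
    have "integral {a..y} G + integral {y..y+s} G = integral {a..y+s} G"
      by (rule Henstock_Kurzweil_Integration.integral_combine)
        (use y s in \<open>auto simp: a_def intro!: integrable_continuous_interval continuous_on_subset[OF G]\<close>)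
    then show "(I (y + s) - I y) / s = steklov s G y"
      using steklov_eq_integral[OF s G, of y] by (simp add: I_def)
  qed auto
qed

lemma continuous_on_steklov_iter:
  assumes s: "s > 0" and G: "continuous_on UNIV G"
  shows "continuous_on UNIV ((steklov s ^^ n) G)"
proof (induction n)
  case (Suc n)
  then show ?case
    using steklov_has_real_derivative[OF s Suc]
    by (simp, meson DERIV_isCont continuous_at_imp_continuous_on)
qed (simp add: G)

lemma steklov_iter_zero: "(steklov 0 ^^ n) G = G"
  by (induction n) (simp_all add: steklov_def[abs_def])

lemma diff_quot_iter_has_real_derivative:
  assumes "\<And>y. (H has_real_derivative H' y) (at y)"
  shows "((diff_quot s ^^ m) H has_real_derivative (diff_quot s ^^ m) H' y) (at y)"
proof (induction m arbitrary: y)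
  case (Suc m)
  have "((\<lambda>y. (diff_quot s ^^ m) H (y + s)) has_real_derivative (diff_quot s ^^ m) H' (y + s) * 1) (at y)"
    by (rule DERIV_chain2[OF Suc.IH]) (auto intro!: derivative_eq_intros)
  then have "((\<lambda>y. ((diff_quot s ^^ m) H (y + s) - (diff_quot s ^^ m) H y) / s) has_real_derivative
        ((diff_quot s ^^ m) H' (y + s) * 1 - (diff_quot s ^^ m) H' y) / s) (at y)"
    by (intro DERIV_cdivide DERIV_diff Suc.IH)
  then show ?case by (simp only: diff_quot_iter_Suc[abs_def] mult_1_right)
qed (use assms in simp)

lemma diff_quot_iter_eq_fdiff:
  assumes "s \<noteq> 0"
  shows "(diff_quot s ^^ n) F z = fdiff n s F z / s ^ n"
proof (induction n arbitrary: z)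
  case 0 then show ?case by (simp add: fdiff_def)
next
  case (Suc n)
  have "(diff_quot s ^^ Suc n) F z = ((diff_quot s ^^ n) F (z + s) - (diff_quot s ^^ n) F z) / s"
    by (rule diff_quot_iter_Suc)
  also have "\<dots> = fdiff (Suc n) s F z / s ^ Suc n"
    using assms by (simp only: Suc.IH) (simp add: fdiff_Suc diff_divide_distrib mult.commute)
  finally show ?case .
qed

lemma abs_steklov_iter_le:
  assumes s: "s > 0" and G: "continuous_on UNIV G"
    and M: "\<And>z. z \<in> {y..y + real n * s} \<Longrightarrow> \<bar>G z\<bar> \<le> M"
  shows "\<bar>(steklov s ^^ n) G y\<bar> \<le> M"
  using M
proof (induction n arbitrary: y)
  case (Suc n)
  have "\<bar>(steklov s ^^ n) G (y + s * \<tau>)\<bar> \<le> M" if "\<tau> \<in> {0..1}" for \<tau>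
  proof (rule Suc.IH)
    fix z assume "z \<in> {y + s * \<tau>..y + s * \<tau> + real n * s}"
    moreover have "s * \<tau> \<le> s" "0 \<le> s * \<tau>" using that s by (auto simp: mult_left_le)
    ultimately show "\<bar>G z\<bar> \<le> M" by (intro Suc.prems) (auto simp: algebra_simps)
  qed
  then have "norm (integral {0..1} (\<lambda>\<tau>. (steklov s ^^ n) G (y + s * \<tau>))) \<le> M * (1 - 0)"
    by (intro integral_bound continuous_on_affine_comp continuous_on_steklov_iter[OF s G]) auto
  then show ?case unfolding steklov_iter_Suc by simp
qed simp

lemma steklov_iter_scale:
  "(steklov (j * s) ^^ n) F (x + j * y) = (steklov s ^^ n) (\<lambda>z. F (x + j * z)) y"
proof (induction n arbitrary: y)
  case (Suc n)
  have "(steklov (j * s) ^^ Suc n) F (x + j * y)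
      = integral {0..1} (\<lambda>\<tau>. (steklov (j * s) ^^ n) F (x + j * (y + s * \<tau>)))"
    by (simp only: steklov_iter_Suc) (simp add: algebra_simps)
  then show ?case by (simp only: Suc.IH steklov_iter_Suc)
qed simp

lemma steklov_iter_lincomb:
  assumes s: "s > 0" and J: "finite J" and G: "\<And>j. j \<in> J \<Longrightarrow> continuous_on UNIV (G j)"
  shows "(steklov s ^^ n) (\<lambda>z. \<Sum>j\<in>J. c j * G j z) y = (\<Sum>j\<in>J. c j * (steklov s ^^ n) (G j) y)"
proof (induction n arbitrary: y)
  case (Suc n)
  have "(steklov s ^^ Suc n) (\<lambda>z. \<Sum>j\<in>J. c j * G j z) y
      = integral {0..1} (\<lambda>\<tau>. \<Sum>j\<in>J. c j * (steklov s ^^ n) (G j) (y + s * \<tau>))"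
    by (simp only: steklov_iter_Suc Suc.IH)
  also have "\<dots> = (\<Sum>j\<in>J. integral {0..1} (\<lambda>\<tau>. c j * (steklov s ^^ n) (G j) (y + s * \<tau>)))"
    by (intro integral_sum J integrable_continuous_interval continuous_intros
        continuous_on_affine_comp continuous_on_steklov_iter[OF s G])
  also have "\<dots> = (\<Sum>j\<in>J. c j * (steklov s ^^ Suc n) (G j) y)"
    by (simp only: steklov_iter_Suc integral_mult_right)
  finally show ?case .
qed simp

text \<open>
  Rescaling each mean to the common step \<open>s\<close> turns the combination of the means into
  the mean of \<open>t \<mapsto> \<Delta>\<^sub>t\<^sup>r f(x)\<close> with \<open>t\<close> ranging over \<open>[0, r s]\<close>.
\<close>
lemma abs_fdiff_combination_steklov_le:
  assumes s: "s > 0" and f: "continuous_on UNIV f"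
    and W: "\<And>t. t \<in> {0..real r * s} \<Longrightarrow> \<bar>fdiff r t f x\<bar> \<le> W"
  shows "\<bar>\<Sum>j=0..r. real (r choose j) * (-1) ^ (r - j) * (steklov (real j * s) ^^ r) f x\<bar> \<le> W"
proof -
  have "(\<Sum>j=0..r. real (r choose j) * (-1) ^ (r - j) * (steklov (real j * s) ^^ r) f x)
      = (\<Sum>j=0..r. real (r choose j) * (-1) ^ (r - j) * (steklov s ^^ r) (\<lambda>z. f (x + real j * z)) 0)"
    using steklov_iter_scale[where y=0 and F=f and x=x] by simp
  also have "\<dots> = (steklov s ^^ r) (\<lambda>z. \<Sum>j=0..r. (real (r choose j) * (-1) ^ (r - j)) * f (x + real j * z)) 0"
    by (subst steklov_iter_lincomb[OF s]) (auto intro!: continuous_on_compose2[OF f] continuous_intros)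
  also have "\<dots> = (steklov s ^^ r) (\<lambda>z. fdiff r z f x) 0"
    by (simp add: fdiff_def)
  finally show ?thesis
    using abs_steklov_iter_le[OF s continuous_on_fdiff_step[OF f], where y=0 and n=r] W by simp
qed

lemma steklov_iter_derivative:
  assumes s: "s > 0" and f: "continuous_on UNIV f" and m: "m < r"
  shows "((diff_quot s ^^ m) ((steklov s ^^ (r - m)) f) has_real_derivative
          (diff_quot s ^^ Suc m) ((steklov s ^^ (r - Suc m)) f) t) (at t)"
proof -
  have eq: "(steklov s ^^ (r - m)) f = steklov s ((steklov s ^^ (r - Suc m)) f)"
    using m by (metis Suc_diff_Suc comp_apply funpow.simps(2))
  have "((steklov s ^^ (r - m)) f has_real_derivative diff_quot s ((steklov s ^^ (r - Suc m)) f) y) (at y)" for y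
    unfolding eq by (rule steklov_has_real_derivative[OF s continuous_on_steklov_iter[OF s f]])
  from diff_quot_iter_has_real_derivative[OF this, where m=m and y=t]
  show ?thesis by (simp add: funpow_Suc_right del: funpow.simps)
qed

text \<open>The \<open>r\<close>-th derivative of \<open>A\<^sub>s\<^sup>r f\<close> is \<open>\<Delta>\<^sub>s\<^sup>r f / s\<^sup>r\<close>.\<close>
lemma steklov_iter_taylor:
  assumes s: "s > 0" and f: "continuous_on UNIV f" and r: "r > 0"
    and K: "\<And>t. \<bar>fdiff r s f t\<bar> \<le> K"
  shows "\<bar>(steklov s ^^ r) f u -
            (\<Sum>m<r. (diff_quot s ^^ m) ((steklov s ^^ (r - m)) f) x / fact m * (u - x) ^ m)\<bar>
           \<le> K / s ^ r / fact r * \<bar>u - x\<bar> ^ r"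
proof (cases "u = x")
  case True
  then show ?thesis using r by (simp add: sum.lessThan_Suc_shift[of _ "r - 1", simplified] zero_power)
next
  case False
  define dd where "dd m = (diff_quot s ^^ m) ((steklov s ^^ (r - m)) f)" for m
  have "\<exists>t. (if u < x then u < t \<and> t < x else x < t \<and> t < u) \<and>
    (steklov s ^^ r) f u = (\<Sum>m<r. (dd m x / fact m) * (u - x)^m) + (dd r t / fact r) * (u - x)^r"
    by (rule Taylor[where a="min u x" and b="max u x"])
      (use r False steklov_iter_derivative[OF s f] in \<open>auto simp: dd_def\<close>)
  then obtain t where t: "(steklov s ^^ r) f u
      = (\<Sum>m<r. (dd m x / fact m) * (u - x)^m) + (dd r t / fact r) * (u - x)^r"
    by blast
  have "\<bar>dd r t\<bar> \<le> K / s ^ r"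
    using diff_quot_iter_eq_fdiff[of s r f t] K[of t] s
    by (simp add: dd_def abs_div divide_right_mono)
  then have "\<bar>dd r t\<bar> * \<bar>u - x\<bar> ^ r / fact r \<le> K / s ^ r * \<bar>u - x\<bar> ^ r / fact r"
    by (intro divide_right_mono mult_right_mono) auto
  then have "\<bar>(dd r t / fact r) * (u - x) ^ r\<bar> \<le> K / s ^ r / fact r * \<bar>u - x\<bar> ^ r"
    by (simp add: abs_mult power_abs field_simps)
  then show ?thesis using t by (simp add: dd_def)
qed


section \<open>Decay estimates\<close>

lemma set_integrable_one_plus_powr:
  fixes \<alpha> :: real assumes a: "\<alpha> > 1"
  shows "set_integrable lborel {0<..} (\<lambda>v. (1 + v) powr (-\<alpha>))"
proof -
  define F where "F v = -((1 + v) powr (1 - \<alpha>)) / (\<alpha> - 1)" for v :: real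
  have "set_integrable lborel (einterval 0 \<infinity>) (\<lambda>v. (1 + v) powr (-\<alpha>))"
  proof (rule interval_integral_FTC_nonneg[where F=F and A="F 0" and B=0])
    fix x assume "0 < ereal x" "ereal x < \<infinity>"
    then have x: "x > 0" by simp
    have "((\<lambda>v. (1 + v) powr (1 - \<alpha>)) has_real_derivative (1 - \<alpha>) * (1 + x) powr (1 - \<alpha> - 1) * 1) (at x)"
      by (rule DERIV_chain2[OF has_real_derivative_powr]) (use x in \<open>auto intro!: derivative_eq_intros\<close>)
    then have "((\<lambda>v. (1 + v) powr (1 - \<alpha>)) has_real_derivative (1 - \<alpha>) * (1 + x) powr (- \<alpha>)) (at x)"
      by simp
    from DERIV_cdivide[OF DERIV_minus[OF this], of "\<alpha> - 1"]
    have "(F has_real_derivative (- ((1 - \<alpha>) * (1 + x) powr (- \<alpha>))) / (\<alpha> - 1)) (at x)"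
      unfolding F_def by simp
    moreover have "(- ((1 - \<alpha>) * (1 + x) powr (- \<alpha>))) / (\<alpha> - 1) = (1 + x) powr (- \<alpha>)"
      using a by (simp add: field_simps)
    ultimately show "(F has_real_derivative (1 + x) powr (- \<alpha>)) (at x)" by simp
    show "isCont (\<lambda>v. (1 + v) powr (- \<alpha>)) x"
      using x by (intro continuous_intros) auto
  next
    show "((F \<circ> real_of_ereal) \<longlongrightarrow> F 0) (at_right 0)"
      unfolding zero_ereal_def ereal_tendsto_simps1 F_def
      using a by (intro tendsto_intros) auto
    show "((F \<circ> real_of_ereal) \<longlongrightarrow> 0) (at_left \<infinity>)"
      unfolding ereal_tendsto_simps1 F_def using a by real_asymp
  qed (auto simp: zero_ereal_def)
  then show ?thesis by (simp add: zero_ereal_def)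
qed

lemma integrable_one_plus_abs_powr:
  fixes \<alpha> :: real assumes a: "\<alpha> > 1"
  shows "integrable lborel (\<lambda>v. (1 + \<bar>v\<bar>) powr (-\<alpha>))"
proof -
  define g where "g v = indicator {0<..} v * (1 + v) powr (-\<alpha>)" for v :: real
  have g: "integrable lborel g"
    using set_integrable_one_plus_powr[OF a] unfolding set_integrable_def g_def by simp
  have "integrable lborel (\<lambda>v. g (0 + (-1) * v))"
    by (rule lborel_integrable_real_affine[OF g]) simp
  moreover have "integrable lborel (\<lambda>v. 1 * indicator {-1..1::real} v :: real)"
    using borel_integrable_atLeastAtMost[of "-1" 1 "\<lambda>_. 1::real"] by simp
  ultimately have "integrable lborel (\<lambda>v. g v + g (0 + (-1) * v) + 1 * indicator {-1..1::real} v)"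
    using g by auto
  then show ?thesis
    by (rule Bochner_Integration.integrable_bound, measurable, intro AE_I2)
      (cases rule: linorder_cases[of _ 0]; simp add: g_def indicator_def)
qed

lemma powr_neg_le_one_plus:
  fixes a \<beta> :: real assumes "a \<ge> 1" "\<beta> \<ge> 0"
  shows "a powr (-\<beta>) \<le> 2 powr \<beta> * (1 + a) powr (-\<beta>)"
proof -
  have "(2 * a) powr (-\<beta>) \<le> (1 + a) powr (-\<beta>)"
    using assms by (intro powr_mono2') auto
  then have "2 powr (-\<beta>) * a powr (-\<beta>) \<le> (1 + a) powr (-\<beta>)"
    by (simp add: powr_mult)
  then have "2 powr \<beta> * (2 powr (-\<beta>) * a powr (-\<beta>)) \<le> 2 powr \<beta> * (1 + a) powr (-\<beta>)"
    by (intro mult_left_mono) auto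
  moreover have "2 powr \<beta> * (2 powr (-\<beta>) * a powr (-\<beta>)) = a powr (-\<beta>)"
    by (simp add: powr_minus)
  ultimately show ?thesis by simp
qed

lemma cond_Theta_weighted_tail:
  assumes Th: "cond_Theta \<theta> \<xi>" and tr: "\<theta> > real r"
  obtains C M where "M \<ge> 1" "C \<ge> 0"
    "\<And>v. \<bar>v\<bar> > M \<Longrightarrow> \<bar>\<xi> v\<bar> * (1 + \<bar>v\<bar>) ^ r \<le> C * (1 + \<bar>v\<bar>) powr (-(\<theta> - real r))"
proof -
  from Th obtain C0 M0 where h: "\<And>u. \<bar>u\<bar> > M0 \<Longrightarrow> \<bar>\<xi> u\<bar> \<le> C0 * \<bar>u\<bar> powr (- \<theta>)"
    unfolding cond_Theta_def by blast
  define C1 where "C1 = max C0 0"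
  define \<beta> where "\<beta> = \<theta> - real r"
  show ?thesis
  proof (rule that[of "max M0 1" "C1 * 2 ^ r * 2 powr \<beta>"])
    fix v :: real assume v: "\<bar>v\<bar> > max M0 1"
    define a where "a = \<bar>v\<bar>"
    have a1: "a > 1" using v by (simp add: a_def)
    have "\<bar>\<xi> v\<bar> \<le> C0 * a powr (- \<theta>)" using h[of v] v unfolding a_def by simp
    also have "\<dots> \<le> C1 * a powr (- \<theta>)" unfolding C1_def by (intro mult_right_mono) auto
    finally have "\<bar>\<xi> v\<bar> \<le> C1 * a powr (- \<theta>)" .
    moreover have "(1 + a) ^ r \<le> 2 ^ r * a ^ r"
      using power_mono[of "1 + a" "2 * a" r] a1 by (simp add: power_mult_distrib)
    ultimately have "\<bar>\<xi> v\<bar> * (1 + a) ^ r \<le> C1 * a powr (- \<theta>) * (2 ^ r * a ^ r)"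
      using a1 by (intro mult_mono) (auto simp: C1_def)
    also have "\<dots> = C1 * 2 ^ r * a powr (- \<beta>)"
      using a1 by (simp add: \<beta>_def powr_realpow[symmetric] powr_add[symmetric] algebra_simps)
    also have "\<dots> \<le> C1 * 2 ^ r * (2 powr \<beta> * (1 + a) powr (-\<beta>))"
      using powr_neg_le_one_plus[of a \<beta>] a1 tr by (intro mult_left_mono) (auto simp: C1_def \<beta>_def)
    finally show "\<bar>\<xi> v\<bar> * (1 + \<bar>v\<bar>) ^ r \<le> C1 * 2 ^ r * 2 powr \<beta> * (1 + \<bar>v\<bar>) powr (-(\<theta> - real r))"
      by (simp add: a_def \<beta>_def mult_ac)
  qed (auto simp: C1_def)
qed

lemma cond_Theta_weighted_bound:
  assumes Th: "cond_Theta \<theta> \<xi>" and tr: "\<theta> > real r" and B: "\<And>v. \<bar>\<xi> v\<bar> \<le> B"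
  obtains C where "C \<ge> 0"
    "\<And>v. \<bar>\<xi> v\<bar> * (1 + \<bar>v\<bar>) ^ r \<le> C * (1 + \<bar>v\<bar>) powr (-(\<theta> - real r))"
proof -
  obtain C1 M where M: "M \<ge> 1" "C1 \<ge> 0"
    "\<And>v. \<bar>v\<bar> > M \<Longrightarrow> \<bar>\<xi> v\<bar> * (1 + \<bar>v\<bar>) ^ r \<le> C1 * (1 + \<bar>v\<bar>) powr (-(\<theta> - real r))"
    by (rule cond_Theta_weighted_tail[OF Th tr]) auto
  define \<beta> where "\<beta> = \<theta> - real r"
  define C2 where "C2 = max B 0 * (1 + M) ^ r * (1 + M) powr \<beta>"
  show ?thesis
  proof (rule that[of "max C1 C2"])
    fix v :: real
    show "\<bar>\<xi> v\<bar> * (1 + \<bar>v\<bar>) ^ r \<le> max C1 C2 * (1 + \<bar>v\<bar>) powr (-(\<theta> - real r))"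
    proof (cases "\<bar>v\<bar> > M")
      case True
      then have "\<bar>\<xi> v\<bar> * (1 + \<bar>v\<bar>) ^ r \<le> C1 * (1 + \<bar>v\<bar>) powr (-(\<theta> - real r))"
        using M(3) by blast
      also have "\<dots> \<le> max C1 C2 * (1 + \<bar>v\<bar>) powr (-(\<theta> - real r))"
        by (intro mult_right_mono) auto
      finally show ?thesis .
    next
      case False
      have "\<bar>\<xi> v\<bar> * (1 + \<bar>v\<bar>) ^ r \<le> max B 0 * (1 + M) ^ r"
        using B[of v] False by (intro mult_mono power_mono) auto
      also have "\<dots> \<le> max B 0 * (1 + M) ^ r * ((1 + M) powr \<beta> * (1 + \<bar>v\<bar>) powr (- \<beta>))"
      proof -
        have "1 = (1 + M) powr \<beta> * (1 + M) powr (- \<beta>)"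
          using M(1) by (simp add: powr_add[symmetric])
        also have "\<dots> \<le> (1 + M) powr \<beta> * (1 + \<bar>v\<bar>) powr (- \<beta>)"
          using False tr by (intro mult_left_mono powr_mono2') (auto simp: \<beta>_def)
        finally show ?thesis
          using mult_left_mono[of 1 _ "max B 0 * (1 + M) ^ r"] M(1) by simp
      qed
      also have "\<dots> = C2 * (1 + \<bar>v\<bar>) powr (- \<beta>)"
        by (simp add: C2_def mult_ac)
      also have "\<dots> \<le> max C1 C2 * (1 + \<bar>v\<bar>) powr (- \<beta>)"
        by (intro mult_right_mono) auto
      finally show ?thesis by (simp add: \<beta>_def)
    qed
  qed (use M in auto)
qed

lemma summable_on_one_plus_abs_int_powr:
  fixes \<beta> :: real assumes b: "\<beta> > 1"
  shows "(\<lambda>k::int. (1 + \<bar>real_of_int k\<bar>) powr (-\<beta>)) summable_on UNIV"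
proof -
  define e where "e k = (1 + \<bar>real_of_int k\<bar>) powr (-\<beta>)" for k :: int
  have "summable (\<lambda>n. real n powr (-\<beta>))" using b by (subst summable_real_powr_iff) auto
  then have s: "summable (\<lambda>n. e (int n))"
    by (subst (asm) summable_Suc_iff[symmetric]) (simp add: e_def add.commute)
  have "(\<lambda>n. e (int n)) summable_on UNIV"
    using s by (subst summable_on_UNIV_nonneg_real_iff) (auto simp: e_def)
  then have "e summable_on range int"
    by (subst summable_on_reindex) (auto simp: o_def)
  moreover have "(\<lambda>n. e (- int n)) summable_on UNIV"
    using s by (subst summable_on_UNIV_nonneg_real_iff) (auto simp: e_def)
  then have "e summable_on range (\<lambda>n. - int n)"
    by (subst summable_on_reindex) (auto simp: o_def inj_def)
  moreover have "(UNIV :: int set) = range int \<union> range (\<lambda>n. - int n)"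
    by (auto intro: int_cases2)
  ultimately have "e summable_on UNIV" by (metis summable_on_union)
  then show ?thesis unfolding e_def .
qed

text \<open>Shifting by \<open>\<lfloor>u\<rfloor>\<close> costs a factor \<open>2\<^sup>\<beta>\<close>.\<close>
lemma int_translates_one_plus_abs_powr:
  fixes \<beta> :: real assumes b: "\<beta> > 1"
  obtains Z where "Z \<ge> 0"
    "\<And>u. (\<lambda>k::int. (1 + \<bar>u - real_of_int k\<bar>) powr (-\<beta>)) summable_on UNIV"
    "\<And>u. (\<Sum>\<^sub>\<infinity>k::int. (1 + \<bar>u - real_of_int k\<bar>) powr (-\<beta>)) \<le> Z"
proof -
  define e where "e k = (1 + \<bar>real_of_int k\<bar>) powr (-\<beta>)" for k :: int
  have se: "e summable_on UNIV" using summable_on_one_plus_abs_int_powr[OF b] unfolding e_def .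
  have sh: "(\<lambda>k. e (k - n0)) summable_on UNIV" for n0 :: int
    using se by (subst summable_on_reindex_bij_witness[where i="\<lambda>k. k + n0" and j="\<lambda>k. k - n0"]) auto
  have ih: "(\<Sum>\<^sub>\<infinity>k. e (k - n0)) = (\<Sum>\<^sub>\<infinity>k. e k)" for n0 :: int
    by (rule infsum_reindex_bij_witness[where i="\<lambda>k. k + n0" and j="\<lambda>k. k - n0"]) auto
  have cmp: "(1 + \<bar>u - real_of_int k\<bar>) powr (-\<beta>) \<le> 2 powr \<beta> * e (k - \<lfloor>u\<rfloor>)" for u k
  proof -
    have "1 + \<bar>real_of_int (k - \<lfloor>u\<rfloor>)\<bar> \<le> 2 * (1 + \<bar>u - real_of_int k\<bar>)"
      using of_int_floor_le[of u] real_of_int_floor_add_one_gt[of u] by (simp add: abs_if) linarith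
    then have "(2 * (1 + \<bar>u - real_of_int k\<bar>)) powr (-\<beta>) \<le> e (k - \<lfloor>u\<rfloor>)"
      unfolding e_def using b by (intro powr_mono2') auto
    then have "2 powr (-\<beta>) * (1 + \<bar>u - real_of_int k\<bar>) powr (-\<beta>) \<le> e (k - \<lfloor>u\<rfloor>)"
      using powr_mult[of 2 "1 + \<bar>u - real_of_int k\<bar>" "-\<beta>"] by simp
    then have "2 powr \<beta> * (2 powr (-\<beta>) * (1 + \<bar>u - real_of_int k\<bar>) powr (-\<beta>)) \<le> 2 powr \<beta> * e (k - \<lfloor>u\<rfloor>)"
      by (intro mult_left_mono) auto
    moreover have "2 powr \<beta> * (2 powr (-\<beta>) * (1 + \<bar>u - real_of_int k\<bar>) powr (-\<beta>))
        = (1 + \<bar>u - real_of_int k\<bar>) powr (-\<beta>)"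
      by (simp add: powr_minus)
    ultimately show ?thesis by simp
  qed
  show ?thesis
  proof (rule that[of "2 powr \<beta> * (\<Sum>\<^sub>\<infinity>k. e k)"])
    show "0 \<le> 2 powr \<beta> * (\<Sum>\<^sub>\<infinity>k. e k)" unfolding e_def by (intro mult_nonneg_nonneg infsum_nonneg) auto
  next
    fix u :: real
    have s2: "(\<lambda>k. 2 powr \<beta> * e (k - \<lfloor>u\<rfloor>)) summable_on UNIV"
      by (intro summable_on_cmult_right sh)
    show s: "(\<lambda>k::int. (1 + \<bar>u - real_of_int k\<bar>) powr (-\<beta>)) summable_on UNIV"
      by (rule summable_on_comparison_test[OF s2]) (auto intro: cmp)
    have "(\<Sum>\<^sub>\<infinity>k::int. (1 + \<bar>u - real_of_int k\<bar>) powr (-\<beta>)) \<le> (\<Sum>\<^sub>\<infinity>k. 2 powr \<beta> * e (k - \<lfloor>u\<rfloor>))"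
      by (rule infsum_mono[OF s s2]) (rule cmp)
    also have "\<dots> = 2 powr \<beta> * (\<Sum>\<^sub>\<infinity>k. e k)"
      by (subst infsum_cmult_right) (auto intro: sh simp: ih)
    finally show "(\<Sum>\<^sub>\<infinity>k::int. (1 + \<bar>u - real_of_int k\<bar>) powr (-\<beta>)) \<le> 2 powr \<beta> * (\<Sum>\<^sub>\<infinity>k. e k)" .
  qed
qed

section \<open>The operator on functions of polynomial growth\<close>

lemma abs_power_le_one_plus_abs_power:
  fixes a :: real assumes "j \<le> r" shows "\<bar>a\<bar> ^ j \<le> (1 + \<bar>a\<bar>) ^ r"
  using power_mono[of "\<bar>a\<bar>" "1 + \<bar>a\<bar>" j] power_increasing[OF assms, of "1 + \<bar>a\<bar>"] by simp

lemma abs_power_le_one_plus_power: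
  fixes a :: real assumes "m \<le> r" shows "\<bar>a\<bar> ^ m \<le> 1 + \<bar>a\<bar> ^ r"
proof (cases "\<bar>a\<bar> \<le> 1")
  case True
  then show ?thesis using power_le_one[of "\<bar>a\<bar>" m] by (smt (verit) zero_le_power abs_ge_zero)
next
  case False
  then have "\<bar>a\<bar> ^ m \<le> \<bar>a\<bar> ^ r" by (intro power_increasing assms) auto
  then show ?thesis by simp
qed

lemma has_sum_finite_sum:
  fixes f :: "'i \<Rightarrow> 'a \<Rightarrow> real"
  assumes "finite I" "\<And>i. i \<in> I \<Longrightarrow> (f i has_sum s i) A"
  shows "((\<lambda>x. \<Sum>i\<in>I. f i x) has_sum (\<Sum>i\<in>I. s i)) A"
  using assms by (induction I rule: finite_induct) (auto intro!: has_sum_add)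

lemma growth_at_sample_le:
  fixes w x v A B :: real and k :: int
  assumes w: "w > 0" and A: "A \<ge> 0" and B: "B \<ge> 0"
  shows "A + B * \<bar>(v + of_int k) / w - x\<bar> ^ n
           \<le> (A + B / w ^ n) * (1 + \<bar>w * x - of_int k\<bar>) ^ n * (1 + \<bar>v\<bar>) ^ n"
proof -
  define t where "t = of_int k - w * x"
  define P where "P = (1 + \<bar>t\<bar>) ^ n * (1 + \<bar>v\<bar>) ^ n"
  have "(v + of_int k) / w - x = (v + t) / w"
    using w by (simp add: t_def field_simps)
  then have "\<bar>(v + of_int k) / w - x\<bar> ^ n = \<bar>v + t\<bar> ^ n / w ^ n"
    using w by (simp add: power_divide)
  also have "\<dots> \<le> P / w ^ n"
  proof -
    have "\<bar>v + t\<bar> \<le> \<bar>v\<bar> + \<bar>t\<bar>" by (rule abs_triangle_ineq)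
    also have "\<dots> \<le> (1 + \<bar>v\<bar>) * (1 + \<bar>t\<bar>)" by (simp add: algebra_simps)
    finally have "\<bar>v + t\<bar> \<le> (1 + \<bar>v\<bar>) * (1 + \<bar>t\<bar>)" .
    then have "\<bar>v + t\<bar> ^ n \<le> ((1 + \<bar>v\<bar>) * (1 + \<bar>t\<bar>)) ^ n"
      by (intro power_mono) auto
    then show ?thesis
      using w by (intro divide_right_mono) (auto simp: P_def power_mult_distrib mult.commute)
  qed
  finally have "B * \<bar>(v + of_int k) / w - x\<bar> ^ n \<le> B * (P / w ^ n)"
    using B by (rule mult_left_mono)
  moreover have "A \<le> A * P"
  proof -
    have "1 \<le> (1 + \<bar>t\<bar>) ^ n" "1 \<le> (1 + \<bar>v\<bar>) ^ n" by (auto intro!: one_le_power)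
    then have "1 \<le> P" unfolding P_def by (metis mult_mono' mult_1 zero_le_one)
    then show ?thesis using A by (simp add: mult_le_cancel_left1)
  qed
  ultimately have "A + B * \<bar>(v + of_int k) / w - x\<bar> ^ n \<le> (A + B / w ^ n) * P"
    by (simp add: algebra_simps)
  then show ?thesis
    by (simp add: P_def t_def abs_minus_commute mult.assoc)
qed

text \<open>
  \<open>durr_sum\<close> is the Durrmeyer operator after the substitution \<open>u = (v + k)/w\<close> in the
  \<open>k\<close>-th integral (lemma \<open>durrmeyer_eq_durr_sum\<close>); \<open>S\<phi>\<close> bounds the \<open>r\<close>-th absolute
  moments of \<open>\<phi>\<close> uniformly in the sampling point.
\<close>
locale durrmeyer_kernels =
  fixes \<phi> \<psi> :: "real \<Rightarrow> real" and r :: nat and S\<phi> :: real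
  assumes phi_weighted_summable:
      "\<And>u. (\<lambda>k::int. \<bar>\<phi> (u - of_int k)\<bar> * (1 + \<bar>u - of_int k\<bar>) ^ r) summable_on UNIV"
    and phi_weighted_sum_le:
      "\<And>u. (\<Sum>\<^sub>\<infinity>k::int. \<bar>\<phi> (u - of_int k)\<bar> * (1 + \<bar>u - of_int k\<bar>) ^ r) \<le> S\<phi>"
    and psi_weighted_integrable: "integrable lborel (\<lambda>v. \<bar>\<psi> v\<bar> * (1 + \<bar>v\<bar>) ^ r)"
    and psi_measurable: "\<psi> \<in> borel_measurable borel"
begin

definition P\<psi> :: real where "P\<psi> = (LINT v|lborel. \<bar>\<psi> v\<bar> * (1 + \<bar>v\<bar>) ^ r)"

definition sample_integral :: "real \<Rightarrow> (real \<Rightarrow> real) \<Rightarrow> int \<Rightarrow> real" where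
  "sample_integral w h k = (LINT v|lborel. \<psi> v * h ((v + of_int k) / w))"

definition durr_sum :: "real \<Rightarrow> real \<Rightarrow> (real \<Rightarrow> real) \<Rightarrow> real" where
  "durr_sum w x h = (\<Sum>\<^sub>\<infinity>k::int. \<phi> (w * x - of_int k) * sample_integral w h k)"

definition poly_growth :: "real \<Rightarrow> (real \<Rightarrow> real) \<Rightarrow> bool" where
  "poly_growth x h \<longleftrightarrow> h \<in> borel_measurable borel \<and>
     (\<exists>A B. 0 \<le> A \<and> 0 \<le> B \<and> (\<forall>y. \<bar>h y\<bar> \<le> A + B * \<bar>y - x\<bar> ^ r))"

lemma P\<psi>_nonneg: "P\<psi> \<ge> 0"
  unfolding P\<psi>_def by (rule integral_nonneg_AE) auto

lemma S\<phi>_nonneg: "S\<phi> \<ge> 0"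
  using phi_weighted_sum_le[of 0] infsum_nonneg[of UNIV
      "\<lambda>k::int. \<bar>\<phi> (0 - of_int k)\<bar> * (1 + \<bar>0 - of_int k\<bar>) ^ r"]
  by force

lemma durrmeyer_eq_durr_sum:
  assumes w: "w > 0"
  shows "durrmeyer \<phi> \<psi> w h x = durr_sum w x h"
proof -
  have "w * (LINT u|lborel. \<psi> (w * u - of_int k) * h u) = sample_integral w h k" for k :: int
  proof -
    have "(LINT u|lborel. \<psi> (w * u - of_int k) * h u) =
        \<bar>1 / w\<bar> *\<^sub>R (LINT v|lborel. \<psi> (w * (of_int k / w + (1 / w) * v) - of_int k)
          * h (of_int k / w + (1 / w) * v))"
      by (rule lborel_integral_real_affine) (use w in simp)
    also have "(\<lambda>v. \<psi> (w * (of_int k / w + (1 / w) * v) - of_int k) * h (of_int k / w + (1 / w) * v))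
        = (\<lambda>v. \<psi> v * h ((v + of_int k) / w))"
      using w by (intro ext) (simp add: field_simps)
    finally show ?thesis using w by (simp add: sample_integral_def)
  qed
  then show ?thesis unfolding durrmeyer_def durr_sum_def by simp
qed

lemma poly_growthE:
  assumes "poly_growth x h"
  obtains A B where "h \<in> borel_measurable borel" "0 \<le> A" "0 \<le> B"
    "\<And>y. \<bar>h y\<bar> \<le> A + B * \<bar>y - x\<bar> ^ r"
  using assms unfolding poly_growth_def by auto

lemma poly_growth_continuous:
  assumes "continuous_on UNIV h" "A \<ge> 0" "B \<ge> 0" "\<And>y. \<bar>h y\<bar> \<le> A + B * \<bar>y - x\<bar> ^ r"
  shows "poly_growth x h"
  unfolding poly_growth_def using assms by (auto intro: borel_measurable_continuous_onI)

lemma poly_growth_add: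
  assumes "poly_growth x h1" "poly_growth x h2" shows "poly_growth x (\<lambda>y. h1 y + h2 y)"
proof -
  obtain A1 B1 where 1: "h1 \<in> borel_measurable borel" "0 \<le> A1" "0 \<le> B1"
      "\<And>y. \<bar>h1 y\<bar> \<le> A1 + B1 * \<bar>y - x\<bar> ^ r"
    by (rule poly_growthE[OF assms(1)]) blast
  obtain A2 B2 where 2: "h2 \<in> borel_measurable borel" "0 \<le> A2" "0 \<le> B2"
      "\<And>y. \<bar>h2 y\<bar> \<le> A2 + B2 * \<bar>y - x\<bar> ^ r"
    by (rule poly_growthE[OF assms(2)]) blast
  have "\<bar>h1 y + h2 y\<bar> \<le> (A1 + A2) + (B1 + B2) * \<bar>y - x\<bar> ^ r" for y
    using 1(4)[of y] 2(4)[of y] abs_triangle_ineq[of "h1 y" "h2 y"] by (simp add: algebra_simps)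
  moreover have "(\<lambda>y. h1 y + h2 y) \<in> borel_measurable borel" using 1(1) 2(1) by measurable
  ultimately show ?thesis
    unfolding poly_growth_def using 1 2 by (intro conjI exI[of _ "A1 + A2"] exI[of _ "B1 + B2"]) auto
qed

lemma poly_growth_cmult:
  assumes "poly_growth x h" shows "poly_growth x (\<lambda>y. c * h y)"
proof -
  obtain A B where 1: "h \<in> borel_measurable borel" "0 \<le> A" "0 \<le> B"
      "\<And>y. \<bar>h y\<bar> \<le> A + B * \<bar>y - x\<bar> ^ r"
    by (rule poly_growthE[OF assms]) blast
  have "\<bar>c * h y\<bar> \<le> \<bar>c\<bar> * A + (\<bar>c\<bar> * B) * \<bar>y - x\<bar> ^ r" for y
    using mult_left_mono[OF 1(4)[of y], of "\<bar>c\<bar>"] by (simp add: abs_mult algebra_simps)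
  moreover have "(\<lambda>y. c * h y) \<in> borel_measurable borel" using 1(1) by measurable
  ultimately show ?thesis
    unfolding poly_growth_def using 1 by (intro conjI exI[of _ "\<bar>c\<bar> * A"] exI[of _ "\<bar>c\<bar> * B"]) auto
qed

lemma poly_growth_sum:
  assumes "finite I" "\<And>i. i \<in> I \<Longrightarrow> poly_growth x (h i)"
  shows "poly_growth x (\<lambda>y. \<Sum>i\<in>I. h i y)"
  using assms
proof (induction I rule: finite_induct)
  case empty
  show ?case by (rule poly_growth_continuous[of _ 0 0]) auto
next
  case (insert i I)
  then show ?case by (simp add: poly_growth_add)
qed

lemma poly_growth_monomial:
  assumes "m \<le> r" shows "poly_growth x (\<lambda>y. (y - x) ^ m)"
  using abs_power_le_one_plus_power[OF assms]
  by (intro poly_growth_continuous[where A=1 and B=1]) (auto intro!: continuous_intros simp: power_abs)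

lemma poly_growth_poly: "poly_growth x (\<lambda>y. \<Sum>m<r. a m * (y - x) ^ m)"
  by (intro poly_growth_sum poly_growth_cmult poly_growth_monomial finite_lessThan) simp

lemma abs_sample_integrand_le:
  fixes w x A B :: real and h :: "real \<Rightarrow> real" and k :: int
  assumes w: "w > 0" and A: "A \<ge> 0" and B: "B \<ge> 0"
    and hB: "\<And>y. \<bar>h y\<bar> \<le> A + B * \<bar>y - x\<bar> ^ r"
  shows "\<bar>\<psi> v * h ((v + of_int k) / w)\<bar>
           \<le> (A + B / w ^ r) * (1 + \<bar>w * x - of_int k\<bar>) ^ r * (\<bar>\<psi> v\<bar> * (1 + \<bar>v\<bar>) ^ r)"
proof -
  have "\<bar>h ((v + of_int k) / w)\<bar> \<le> (A + B / w ^ r) * (1 + \<bar>w * x - of_int k\<bar>) ^ r * (1 + \<bar>v\<bar>) ^ r"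
    using hB[of "(v + of_int k) / w"] growth_at_sample_le[OF w A B, of v k x r] by linarith
  then have "\<bar>\<psi> v\<bar> * \<bar>h ((v + of_int k) / w)\<bar>
      \<le> \<bar>\<psi> v\<bar> * ((A + B / w ^ r) * (1 + \<bar>w * x - of_int k\<bar>) ^ r * (1 + \<bar>v\<bar>) ^ r)"
    by (rule mult_left_mono) simp
  then show ?thesis by (simp add: abs_mult mult_ac)
qed

lemma sample_integrand_integrable:
  assumes w: "w > 0" and "poly_growth x h"
  shows "integrable lborel (\<lambda>v. \<psi> v * h ((v + of_int k) / w))"
proof -
  obtain A B where h: "h \<in> borel_measurable borel" "0 \<le> A" "0 \<le> B"
      "\<And>y. \<bar>h y\<bar> \<le> A + B * \<bar>y - x\<bar> ^ r"
    by (rule poly_growthE[OF assms(2)]) blast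
  show ?thesis
  proof (rule Bochner_Integration.integrable_bound)
    show "integrable lborel (\<lambda>v. (A + B / w ^ r) * (1 + \<bar>w * x - of_int k\<bar>) ^ r
        * (\<bar>\<psi> v\<bar> * (1 + \<bar>v\<bar>) ^ r))"
      using psi_weighted_integrable by simp
    show "(\<lambda>v. \<psi> v * h ((v + of_int k) / w)) \<in> borel_measurable lborel"
      using psi_measurable h(1) by measurable
    show "AE v in lborel. norm (\<psi> v * h ((v + of_int k) / w))
        \<le> norm ((A + B / w ^ r) * (1 + \<bar>w * x - of_int k\<bar>) ^ r * (\<bar>\<psi> v\<bar> * (1 + \<bar>v\<bar>) ^ r))"
      using abs_sample_integrand_le[OF w h(2-4)] h(2,3) w by (intro AE_I2) (simp add: abs_mult)
  qed
qed

lemma abs_sample_integral_le: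
  assumes w: "w > 0" and hb: "h \<in> borel_measurable borel" and A: "A \<ge> 0" and B: "B \<ge> 0"
    and hB: "\<And>y. \<bar>h y\<bar> \<le> A + B * \<bar>y - x\<bar> ^ r"
  shows "\<bar>sample_integral w h k\<bar> \<le> (A + B / w ^ r) * (1 + \<bar>w * x - of_int k\<bar>) ^ r * P\<psi>"
proof -
  have "integrable lborel (\<lambda>v. \<psi> v * h ((v + of_int k) / w))"
    by (rule sample_integrand_integrable[OF w]) (use hb A B hB in \<open>auto simp: poly_growth_def\<close>)
  then have "norm (sample_integral w h k) \<le> (LINT v|lborel. (A + B / w ^ r)
      * (1 + \<bar>w * x - of_int k\<bar>) ^ r * (\<bar>\<psi> v\<bar> * (1 + \<bar>v\<bar>) ^ r))"
    unfolding sample_integral_def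
    by (rule Bochner_Integration.integral_norm_bound_integral)
      (use psi_weighted_integrable abs_sample_integrand_le[OF w A B hB] in simp_all)
  then show ?thesis by (simp add: P\<psi>_def)
qed

lemma abs_durr_sum_term_le:
  assumes w: "w > 0" and hb: "h \<in> borel_measurable borel" and A: "A \<ge> 0" and B: "B \<ge> 0"
    and hB: "\<And>y. \<bar>h y\<bar> \<le> A + B * \<bar>y - x\<bar> ^ r"
  shows "\<bar>\<phi> (w * x - of_int k) * sample_integral w h k\<bar>
      \<le> (A + B / w ^ r) * P\<psi> * (\<bar>\<phi> (w * x - of_int k)\<bar> * (1 + \<bar>w * x - of_int k\<bar>) ^ r)"
  using mult_left_mono[OF abs_sample_integral_le[OF w hb A B hB, of k], of "\<bar>\<phi> (w * x - of_int k)\<bar>"]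
  by (simp add: abs_mult mult_ac)

lemma durr_sum_summable:
  assumes w: "w > 0" and "poly_growth x h"
  shows "(\<lambda>k::int. \<phi> (w * x - of_int k) * sample_integral w h k) summable_on UNIV"
proof -
  obtain A B where h: "h \<in> borel_measurable borel" "0 \<le> A" "0 \<le> B"
      "\<And>y. \<bar>h y\<bar> \<le> A + B * \<bar>y - x\<bar> ^ r"
    by (rule poly_growthE[OF assms(2)]) blast
  have "norm (\<phi> (w * x - of_int k) * sample_integral w h k)
      \<le> (A + B / w ^ r) * P\<psi> * (\<bar>\<phi> (w * x - of_int k)\<bar> * (1 + \<bar>w * x - of_int k\<bar>) ^ r)" for k
    unfolding real_norm_def by (rule abs_durr_sum_term_le[OF w h])
  then have "(\<lambda>k::int. norm (\<phi> (w * x - of_int k) * sample_integral w h k)) summable_on UNIV"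
    by (intro summable_on_comparison_test[OF summable_on_cmult_right[OF phi_weighted_summable[of "w * x"]]])
      auto
  then show ?thesis by (rule abs_summable_summable)
qed

lemma abs_durr_sum_le:
  assumes w: "w > 0" and hb: "h \<in> borel_measurable borel" and A: "A \<ge> 0" and B: "B \<ge> 0"
    and hB: "\<And>y. \<bar>h y\<bar> \<le> A + B * \<bar>y - x\<bar> ^ r"
  shows "\<bar>durr_sum w x h\<bar> \<le> (A + B / w ^ r) * P\<psi> * S\<phi>"
proof -
  define c where "c = (A + B / w ^ r) * P\<psi>"
  define g where "g k = c * (\<bar>\<phi> (w * x - of_int k)\<bar> * (1 + \<bar>w * x - of_int k\<bar>) ^ r)" for k :: int
  have gs: "g summable_on UNIV"
    unfolding g_def by (intro summable_on_cmult_right phi_weighted_summable[of "w * x"])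
  have le: "norm (\<phi> (w * x - of_int k) * sample_integral w h k) \<le> g k" for k
    unfolding g_def c_def real_norm_def by (rule abs_durr_sum_term_le[OF w hb A B hB])
  have ns: "(\<lambda>k::int. norm (\<phi> (w * x - of_int k) * sample_integral w h k)) summable_on UNIV"
    by (rule summable_on_comparison_test[OF gs]) (use le in auto)
  have "\<bar>durr_sum w x h\<bar> \<le> (\<Sum>\<^sub>\<infinity>k. norm (\<phi> (w * x - of_int k) * sample_integral w h k))"
    unfolding durr_sum_def using norm_infsum_bound[OF ns] by simp
  also have "\<dots> \<le> (\<Sum>\<^sub>\<infinity>k. g k)"
    by (rule infsum_mono[OF ns gs le])
  also have "\<dots> = c * (\<Sum>\<^sub>\<infinity>k::int. \<bar>\<phi> (w * x - of_int k)\<bar> * (1 + \<bar>w * x - of_int k\<bar>) ^ r)"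
    unfolding g_def by (rule infsum_cmult_right')
  also have "\<dots> \<le> c * S\<phi>"
    using A B w P\<psi>_nonneg unfolding c_def by (intro mult_left_mono phi_weighted_sum_le) simp
  finally show ?thesis by (simp add: c_def)
qed

lemma durr_sum_add:
  assumes w: "w > 0" and h1: "poly_growth x h1" and h2: "poly_growth x h2"
  shows "durr_sum w x (\<lambda>y. h1 y + h2 y) = durr_sum w x h1 + durr_sum w x h2"
proof -
  have J: "sample_integral w (\<lambda>y. h1 y + h2 y) k = sample_integral w h1 k + sample_integral w h2 k" for k
    unfolding sample_integral_def distrib_left
    by (rule Bochner_Integration.integral_add[OF sample_integrand_integrable[OF w h1]
          sample_integrand_integrable[OF w h2]])
  have "durr_sum w x (\<lambda>y. h1 y + h2 y) = (\<Sum>\<^sub>\<infinity>k. \<phi> (w * x - of_int k) * sample_integral w h1 k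
      + \<phi> (w * x - of_int k) * sample_integral w h2 k)"
    unfolding durr_sum_def J by (simp add: distrib_left)
  also have "\<dots> = durr_sum w x h1 + durr_sum w x h2"
    unfolding durr_sum_def by (rule infsum_add[OF durr_sum_summable[OF w h1] durr_sum_summable[OF w h2]])
  finally show ?thesis .
qed

lemma durr_sum_cmult: "durr_sum w x (\<lambda>y. c * h y) = c * durr_sum w x h"
proof -
  have "sample_integral w (\<lambda>y. c * h y) k = c * sample_integral w h k" for k
    unfolding sample_integral_def by (simp add: mult.left_commute)
  then show ?thesis unfolding durr_sum_def by (simp add: mult.left_commute infsum_cmult_right')
qed

lemma durr_sum_sum:
  assumes w: "w > 0" and "finite I" "\<And>i. i \<in> I \<Longrightarrow> poly_growth x (h i)"
  shows "durr_sum w x (\<lambda>y. \<Sum>i\<in>I. h i y) = (\<Sum>i\<in>I. durr_sum w x (h i))"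
  using assms(2,3)
proof (induction I rule: finite_induct)
  case empty
  then show ?case using durr_sum_cmult[of w x 0 "\<lambda>_. 0"] by simp
next
  case (insert i I)
  have "durr_sum w x (\<lambda>y. \<Sum>i\<in>insert i I. h i y) = durr_sum w x (\<lambda>y. h i y + (\<Sum>i\<in>I. h i y))"
    using insert.hyps by simp
  also have "\<dots> = durr_sum w x (h i) + durr_sum w x (\<lambda>y. \<Sum>i\<in>I. h i y)"
    using insert by (intro durr_sum_add[OF w] poly_growth_sum) auto
  finally show ?case using insert by simp
qed

lemma abs_durr_sum_diff_le_bounded:
  assumes w: "w > 0" and h: "continuous_on UNIV h" and M: "\<And>y. \<bar>h y\<bar> \<le> M"
  shows "poly_growth x h" and "\<bar>durr_sum w x h - h x\<bar> \<le> M * P\<psi> * S\<phi> + M"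
proof -
  have M0: "M \<ge> 0" using M[of 0] by simp
  then show "poly_growth x h" using M by (intro poly_growth_continuous[OF h, of M 0]) auto
  have "\<bar>durr_sum w x h\<bar> \<le> (M + 0 / w ^ r) * P\<psi> * S\<phi>"
    by (rule abs_durr_sum_le[OF w borel_measurable_continuous_onI[OF h] M0]) (use M in auto)
  then show "\<bar>durr_sum w x h - h x\<bar> \<le> M * P\<psi> * S\<phi> + M"
    using M[of x] by simp
qed

text \<open>
  Since the coefficient of \<open>g\<^sub>0 = f\<close> in \<open>e = \<Sum>\<^sub>j (-1)\<^sup>r\<^sup>-\<^sup>j (r choose j) g\<^sub>j\<close> is \<open>\<plusminus>1\<close>,
  the error for \<open>f\<close> is controlled by the errors for \<open>e\<close> and for the \<open>g\<^sub>j\<close>, \<open>j \<ge> 1\<close>.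
\<close>
lemma durr_sum_diff_le_combination:
  fixes g :: "nat \<Rightarrow> real \<Rightarrow> real"
  assumes w: "w > 0" and f: "continuous_on UNIV f" and fB: "\<And>y. \<bar>f y\<bar> \<le> Bf" and g0: "g 0 = f"
    and e: "continuous_on UNIV (\<lambda>y. \<Sum>j=0..r. real (r choose j) * (-1) ^ (r - j) * g j y)"
    and \<omega>: "\<And>y. \<bar>\<Sum>j=0..r. real (r choose j) * (-1) ^ (r - j) * g j y\<bar> \<le> \<omega>"
    and g: "\<And>j. j \<in> {1..r} \<Longrightarrow> poly_growth x (g j)"
    and K: "\<And>j. j \<in> {1..r} \<Longrightarrow> \<bar>durr_sum w x (g j) - g j x\<bar> \<le> K" and K0: "K \<ge> 0"
  shows "\<bar>durr_sum w x f - f x\<bar> \<le> \<omega> * P\<psi> * S\<phi> + \<omega> + 2 ^ r * K"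
proof -
  define c where "c j = real (r choose j) * (-1) ^ (r - j)" for j
  define E where "E j = durr_sum w x (g j) - g j x" for j
  define D where "D = durr_sum w x (\<lambda>y. \<Sum>j=0..r. c j * g j y) - (\<Sum>j=0..r. c j * g j x)"
  have "poly_growth x (g j)" if "j \<le> r" for j
    using that g abs_durr_sum_diff_le_bounded(1)[OF w f fB] by (cases "j = 0") (auto simp: g0)
  then have "durr_sum w x (\<lambda>y. \<Sum>j=0..r. c j * g j y) = (\<Sum>j=0..r. c j * durr_sum w x (g j))"
    by (subst durr_sum_sum[OF w]) (auto intro!: poly_growth_cmult simp: durr_sum_cmult)
  then have "D = (-1) ^ r * (durr_sum w x f - f x) + (\<Sum>j\<in>{1..r}. c j * E j)"
    by (simp add: D_def sum_subtractf right_diff_distrib sum.atLeast_Suc_atMost c_def E_def g0)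
  then have "(-1) ^ r * (D - (\<Sum>j\<in>{1..r}. c j * E j)) = ((-1) ^ r * (-1) ^ r) * (durr_sum w x f - f x)"
    by (simp only: mult.assoc add_diff_cancel_right')
  then have "\<bar>durr_sum w x f - f x\<bar> = \<bar>(-1) ^ r * (D - (\<Sum>j\<in>{1..r}. c j * E j))\<bar>"
    by (simp flip: power_mult_distrib)
  also have "\<dots> = \<bar>D - (\<Sum>j\<in>{1..r}. c j * E j)\<bar>"
    by (simp add: abs_mult)
  also have "\<dots> \<le> \<bar>D\<bar> + (\<Sum>j\<in>{1..r}. \<bar>c j * E j\<bar>)"
    using abs_triangle_ineq4[of D] sum_abs[of "\<lambda>j. c j * E j" "{1..r}"] by linarith
  also have "\<bar>D\<bar> \<le> \<omega> * P\<psi> * S\<phi> + \<omega>"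
    using abs_durr_sum_diff_le_bounded(2)[OF w e \<omega>] by (simp add: D_def c_def mult.assoc)
  also have "(\<Sum>j\<in>{1..r}. \<bar>c j * E j\<bar>) \<le> (\<Sum>j\<in>{1..r}. real (r choose j)) * K"
    unfolding sum_distrib_right by (intro sum_mono) (simp add: c_def E_def abs_mult mult_left_mono K)
  also have "\<dots> \<le> 2 ^ r * K"
    using sum_mono2[of "{..r}" "{1..r}" "\<lambda>j. real (r choose j)"] choose_row_sum[of r] K0
    by (intro mult_right_mono) (auto simp flip: of_nat_sum)
  finally show ?thesis by simp
qed

lemma disc_moment_summable:
  assumes "j \<le> r"
  shows "(\<lambda>k::int. \<phi> (u - of_int k) * (of_int k - u) ^ j) summable_on UNIV"
proof -
  have "norm (\<phi> (u - of_int k) * (of_int k - u) ^ j) \<le> \<bar>\<phi> (u - of_int k)\<bar> * (1 + \<bar>u - of_int k\<bar>) ^ r" for k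
    using mult_left_mono[OF abs_power_le_one_plus_abs_power[OF assms, of "u - of_int k"],
        of "\<bar>\<phi> (u - of_int k)\<bar>"]
    by (simp add: abs_mult power_abs abs_minus_commute)
  then have "(\<lambda>k::int. norm (\<phi> (u - of_int k) * (of_int k - u) ^ j)) summable_on UNIV"
    by (intro summable_on_comparison_test[OF phi_weighted_summable[of u]]) auto
  then show ?thesis by (rule abs_summable_summable)
qed

lemma psi_moment_integrable:
  assumes "j \<le> r"
  shows "integrable lborel (\<lambda>v. v ^ j * \<psi> v)"
proof (rule Bochner_Integration.integrable_bound[OF psi_weighted_integrable])
  show "(\<lambda>v. v ^ j * \<psi> v) \<in> borel_measurable lborel" using psi_measurable by measurable
  show "AE v in lborel. norm (v ^ j * \<psi> v) \<le> norm (\<bar>\<psi> v\<bar> * (1 + \<bar>v\<bar>) ^ r)"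
    using mult_right_mono[OF abs_power_le_one_plus_abs_power[OF assms]]
    by (intro AE_I2) (simp add: abs_mult power_abs mult_ac)
qed

lemma sample_integral_monomial:
  assumes w: "w > 0" and m: "m \<le> r"
  shows "sample_integral w (\<lambda>y. (y - x) ^ m) k =
     (\<Sum>\<nu>\<le>m. of_nat (m choose \<nu>) * (of_int k - w * x) ^ (m - \<nu>) / w ^ m * cont_moment \<psi> \<nu>)"
proof -
  define t where "t = of_int k - w * x"
  have expand: "\<psi> v * ((v + of_int k) / w - x) ^ m =
      (\<Sum>\<nu>\<le>m. (of_nat (m choose \<nu>) * t ^ (m - \<nu>) / w ^ m) * (v ^ \<nu> * \<psi> v))" for v
  proof -
    have "(v + of_int k) / w - x = (v + t) / w"
      using w by (simp add: t_def field_simps)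
    then have "\<psi> v * ((v + of_int k) / w - x) ^ m = \<psi> v * ((v + t) ^ m / w ^ m)"
      by (simp add: power_divide)
    also have "\<dots> = \<psi> v * ((\<Sum>\<nu>\<le>m. of_nat (m choose \<nu>) * v ^ \<nu> * t ^ (m - \<nu>)) / w ^ m)"
      by (simp only: binomial_ring)
    finally show ?thesis
      by (simp add: sum_distrib_left sum_divide_distrib mult_ac)
  qed
  have "sample_integral w (\<lambda>y. (y - x) ^ m) k
      = (LINT v|lborel. (\<Sum>\<nu>\<le>m. (of_nat (m choose \<nu>) * t ^ (m - \<nu>) / w ^ m) * (v ^ \<nu> * \<psi> v)))"
    unfolding sample_integral_def expand ..
  also have "\<dots> = (\<Sum>\<nu>\<le>m. (LINT v|lborel. (of_nat (m choose \<nu>) * t ^ (m - \<nu>) / w ^ m) * (v ^ \<nu> * \<psi> v)))"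
    by (rule Bochner_Integration.integral_sum) (use psi_moment_integrable m in auto)
  finally show ?thesis by (simp add: cont_moment_def t_def)
qed

end

section \<open>Reproduction of polynomials and the error estimate\<close>

locale durrmeyer_moments = durrmeyer_kernels +
  assumes r_pos: "r > 0"
    and disc_moment_eq_const: "\<And>j u. j \<le> r \<Longrightarrow> disc_moment \<phi> j u = disc_moment_const \<phi> j"
    and moment_condition: "cond_ii r \<phi> \<psi>"
    and cont_moment_0: "cont_moment \<psi> 0 = 1"
begin

text \<open>
  Expanding \<open>((v + k)/w - x)\<^sup>m\<close> binomially turns the \<open>m\<close>-th monomial into
  \<open>w\<^sup>-\<^sup>m \<Sum>\<^sub>\<nu> (m choose \<nu>) m\<^bsub>m-\<nu>\<^esub>(\<phi>) m\<^sub>\<nu>(\<psi>)\<close>, which is exactly the sum of condition (ii).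
\<close>
lemma durr_sum_monomial:
  assumes w: "w > 0" and m: "m < r"
  shows "durr_sum w x (\<lambda>y. (y - x) ^ m) = (if m = 0 then 1 else 0)"
proof -
  define u where "u = w * x"
  define a where "a \<nu> = of_nat (m choose \<nu>) / w ^ m * cont_moment \<psi> \<nu>" for \<nu>
  have "((\<lambda>k::int. \<Sum>\<nu>\<le>m. a \<nu> * (\<phi> (u - of_int k) * (of_int k - u) ^ (m - \<nu>)))
      has_sum (\<Sum>\<nu>\<le>m. a \<nu> * disc_moment \<phi> (m - \<nu>) u)) UNIV"
    unfolding disc_moment_def
    by (intro has_sum_finite_sum has_sum_cmult_right has_sum_infsum disc_moment_summable) (use m in auto)
  then have "durr_sum w x (\<lambda>y. (y - x) ^ m) = (\<Sum>\<nu>\<le>m. a \<nu> * disc_moment_const \<phi> (m - \<nu>))"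
    unfolding durr_sum_def sample_integral_monomial[OF w less_imp_le[OF m]]
    using m by (intro infsumI) (simp add: u_def a_def disc_moment_eq_const sum_distrib_left mult_ac)
  also have "\<dots> = (\<Sum>\<nu>=0..m. real (m choose \<nu>) * disc_moment_const \<phi> (m - \<nu>) * cont_moment \<psi> \<nu>) / w ^ m"
    unfolding a_def atMost_atLeast0 by (simp add: sum_divide_distrib mult_ac)
  also have "\<dots> = (if m = 0 then 1 else 0)"
    using moment_condition m cont_moment_0 unfolding cond_ii_def by (auto simp: disc_moment_const_def)
  finally show ?thesis .
qed

lemma durr_sum_poly:
  assumes w: "w > 0"
  shows "durr_sum w x (\<lambda>y. \<Sum>m<r. a m * (y - x) ^ m) = a 0"
proof -
  have "durr_sum w x (\<lambda>y. \<Sum>m<r. a m * (y - x) ^ m) = (\<Sum>m<r. durr_sum w x (\<lambda>y. a m * (y - x) ^ m))"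
    by (rule durr_sum_sum[OF w]) (auto intro!: poly_growth_cmult poly_growth_monomial)
  also have "\<dots> = (\<Sum>m<r. if m = 0 then a m else 0)"
    by (intro sum.cong refl) (simp add: durr_sum_cmult durr_sum_monomial[OF w])
  also have "\<dots> = a 0" using r_pos by (simp add: sum.delta)
  finally show ?thesis .
qed

lemma durr_sum_diff_le_taylor:
  assumes w: "w > 0" and g: "continuous_on UNIV g" and B: "B \<ge> 0"
    and taylor: "\<And>y. \<bar>g y - (\<Sum>m<r. a m * (y - x) ^ m)\<bar> \<le> B * \<bar>y - x\<bar> ^ r"
  shows "poly_growth x g" and "\<bar>durr_sum w x g - g x\<bar> \<le> B / w ^ r * P\<psi> * S\<phi>"
proof -
  define T where "T y = (\<Sum>m<r. a m * (y - x) ^ m)" for y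
  define R where "R y = g y - T y" for y
  have T: "poly_growth x T" unfolding T_def[abs_def] by (rule poly_growth_poly)
  have R: "poly_growth x R"
    unfolding R_def[abs_def] T_def
    by (intro poly_growth_continuous[of _ 0 B]) (use taylor B in \<open>auto intro!: continuous_intros g\<close>)
  have g_eq: "g = (\<lambda>y. T y + R y)" by (simp add: R_def)
  show "poly_growth x g" unfolding g_eq by (rule poly_growth_add[OF T R])
  have "(\<Sum>m<r. a m * (x - x) ^ m) = (\<Sum>m<r. if m = 0 then a m else 0)"
    by (intro sum.cong refl) simp
  then have "g x = a 0" using taylor[of x] r_pos by (simp add: zero_power)
  moreover have "durr_sum w x g = durr_sum w x T + durr_sum w x R"
    by (subst g_eq) (rule durr_sum_add[OF w T R])
  moreover have "durr_sum w x T = a 0" unfolding T_def[abs_def] by (rule durr_sum_poly[OF w])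
  ultimately have "durr_sum w x g - g x = durr_sum w x R" by simp
  also have "\<bar>\<dots>\<bar> \<le> (0 + B / w ^ r) * P\<psi> * S\<phi>"
    by (rule abs_durr_sum_le[OF w _ order_refl B]) (use R taylor in \<open>auto simp: poly_growth_def R_def T_def\<close>)
  finally show "\<bar>durr_sum w x g - g x\<bar> \<le> B / w ^ r * P\<psi> * S\<phi>" by simp
qed

text \<open>
  For a step \<open>\<sigma> \<in> [1/(r w), 1/w]\<close> the \<open>r\<close>-th derivative \<open>\<Delta>\<^sub>\<sigma>\<^sup>r f/\<sigma>\<^sup>r\<close> of \<open>A\<^sub>\<sigma>\<^sup>r f\<close> is at
  most \<open>(r w)\<^sup>r \<omega>\<close>, so the Taylor remainder costs \<open>r\<^sup>r \<omega>\<close> after the factor \<open>w\<^sup>-\<^sup>r\<close>.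
\<close>
lemma durr_sum_diff_steklov_le:
  assumes w: "w > 0" and f: "continuous_on UNIV f"
    and \<omega>: "\<And>t y. 0 \<le> t \<Longrightarrow> t \<le> 1 / w \<Longrightarrow> \<bar>fdiff r t f y\<bar> \<le> \<omega>"
    and \<sigma>: "1 / (real r * w) \<le> \<sigma>" "\<sigma> \<le> 1 / w"
  shows "poly_growth x ((steklov \<sigma> ^^ r) f)"
    and "\<bar>durr_sum w x ((steklov \<sigma> ^^ r) f) - (steklov \<sigma> ^^ r) f x\<bar> \<le> real r ^ r * \<omega> * P\<psi> * S\<phi>"
proof -
  have "0 < 1 / (real r * w)" using r_pos w by simp
  then have \<sigma>0: "\<sigma> > 0" using \<sigma>(1) by linarith
  have \<omega>0: "\<omega> \<ge> 0" using \<omega>[of 0 0] w by simp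
  define B where "B = \<omega> / \<sigma> ^ r / fact r"
  have taylor: "\<bar>(steklov \<sigma> ^^ r) f y -
        (\<Sum>m<r. (diff_quot \<sigma> ^^ m) ((steklov \<sigma> ^^ (r - m)) f) x / fact m * (y - x) ^ m)\<bar>
      \<le> B * \<bar>y - x\<bar> ^ r" for y
    unfolding B_def by (rule steklov_iter_taylor[OF \<sigma>0 f r_pos]) (use \<omega> \<sigma>0 \<sigma>(2) in auto)
  have B0: "B \<ge> 0" using \<omega>0 \<sigma>0 by (simp add: B_def)
  have cont: "continuous_on UNIV ((steklov \<sigma> ^^ r) f)" by (rule continuous_on_steklov_iter[OF \<sigma>0 f])
  show "poly_growth x ((steklov \<sigma> ^^ r) f)"
    by (rule durr_sum_diff_le_taylor(1)[OF w cont B0 taylor])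
  have "B / w ^ r = \<omega> / ((\<sigma> * w) ^ r * fact r)"
    by (simp add: B_def power_mult_distrib field_simps)
  also have "\<dots> \<le> \<omega> / ((1 / real r) ^ r * 1)"
  proof (rule divide_left_mono[OF _ \<omega>0])
    have "1 / real r = 1 / (real r * w) * w" using w by simp
    also have "\<dots> \<le> \<sigma> * w" using \<sigma>(1) w by (intro mult_right_mono) auto
    finally have "1 / real r \<le> \<sigma> * w" .
    then show "(1 / real r) ^ r * 1 \<le> (\<sigma> * w) ^ r * fact r"
      using r_pos \<sigma>0 w by (intro mult_mono power_mono) auto
  qed (use \<sigma>0 w r_pos in simp)
  also have "\<dots> = real r ^ r * \<omega>" by (simp add: power_divide)
  finally have "B / w ^ r * P\<psi> * S\<phi> \<le> real r ^ r * \<omega> * P\<psi> * S\<phi>"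
    using P\<psi>_nonneg S\<phi>_nonneg by (intro mult_right_mono) auto
  then show "\<bar>durr_sum w x ((steklov \<sigma> ^^ r) f) - (steklov \<sigma> ^^ r) f x\<bar> \<le> real r ^ r * \<omega> * P\<psi> * S\<phi>"
    using durr_sum_diff_le_taylor(2)[OF w cont B0 taylor] by linarith
qed

lemma durr_sum_diff_le:
  assumes w: "w > 0" and f: "continuous_on UNIV f" and fB: "\<And>y. \<bar>f y\<bar> \<le> Bf"
    and \<omega>: "\<And>t y. 0 \<le> t \<Longrightarrow> t \<le> 1 / w \<Longrightarrow> \<bar>fdiff r t f y\<bar> \<le> \<omega>"
  shows "\<bar>durr_sum w x f - f x\<bar> \<le> (1 + P\<psi> * S\<phi> + 2 ^ r * real r ^ r * P\<psi> * S\<phi>) * \<omega>"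
proof -
  define s where "s = 1 / (real r * w)"
  define g where "g j = (steklov (real j * s) ^^ r) f" for j :: nat
  have s0: "s > 0" and rs: "real r * s = 1 / w" using r_pos w by (auto simp: s_def)
  have step: "1 / (real r * w) \<le> real j * s" "real j * s \<le> 1 / w" if "j \<in> {1..r}" for j
  proof -
    have "1 * s \<le> real j * s" "real j * s \<le> real r * s"
      using that s0 by (intro mult_right_mono; simp)+
    then show "1 / (real r * w) \<le> real j * s" "real j * s \<le> 1 / w"
      unfolding rs s_def[symmetric] by simp_all
  qed
  have "continuous_on UNIV (g j)" for j
    using continuous_on_steklov_iter[OF _ f, of "real j * s"] s0 f
    by (cases "j = 0") (auto simp: g_def steklov_iter_zero)
  then have "continuous_on UNIV (\<lambda>y. \<Sum>j=0..r. real (r choose j) * (-1) ^ (r - j) * g j y)"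
    by (intro continuous_intros)
  moreover have "\<bar>\<Sum>j=0..r. real (r choose j) * (-1) ^ (r - j) * g j y\<bar> \<le> \<omega>" for y
    unfolding g_def using abs_fdiff_combination_steklov_le[OF s0 f] \<omega> rs by simp
  moreover have "real r ^ r * \<omega> * P\<psi> * S\<phi> \<ge> 0"
    using \<omega>[of 0 0] w P\<psi>_nonneg S\<phi>_nonneg by simp
  ultimately have "\<bar>durr_sum w x f - f x\<bar> \<le> \<omega> * P\<psi> * S\<phi> + \<omega> + 2 ^ r * (real r ^ r * \<omega> * P\<psi> * S\<phi>)"
    using durr_sum_diff_steklov_le[OF w f \<omega> step]
    by (intro durr_sum_diff_le_combination[OF w f fB, where g=g]) (auto simp: g_def steklov_iter_zero)
  then show ?thesis by (simp add: algebra_simps)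
qed

lemma durrmeyer_error_le_modsmooth:
  assumes f: "f \<in> bucont" and w: "w > 0"
  shows "\<bar>durrmeyer \<phi> \<psi> w f x - f x\<bar> \<le> (1 + P\<psi> * S\<phi> + 2 ^ r * real r ^ r * P\<psi> * S\<phi>) * modsmooth r f (1 / w)"
proof -
  obtain B where B: "\<And>y. \<bar>f y\<bar> \<le> B" using f unfolding bucont_def bounded_iff by auto
  have "continuous_on UNIV f"
    using f unfolding bucont_def by (auto intro: uniformly_continuous_imp_continuous)
  then show ?thesis
    unfolding durrmeyer_eq_durr_sum[OF w]
    by (rule durr_sum_diff_le[OF w _ B]) (rule abs_fdiff_le_modsmooth[OF B], simp)
qed

end

lemma disc_moment_eq_disc_moment_const:
  assumes "discrete_kernel \<phi>" and "cond_i r \<phi>" and "j \<le> r"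
  shows "disc_moment \<phi> j u = disc_moment_const \<phi> j"
proof (cases "j = 0")
  case True
  have "disc_moment \<phi> 0 u = 1"
    using assms(1) unfolding discrete_kernel_def disc_moment_def by (simp add: infsumI)
  then show ?thesis using True by (simp add: disc_moment_const_def)
next
  case False
  then have "j \<in> {1..r}" using assms(3) by simp
  then have "disc_moment \<phi> j u = disc_moment \<phi> j 0"
    using assms(2) unfolding cond_i_def by blast
  then show ?thesis using False by (simp add: disc_moment_const_def)
qed

lemma discrete_kernel_weighted_translates:
  assumes "discrete_kernel \<phi>" and "cond_Theta \<theta> \<phi>" and \<theta>: "\<theta> > real r + 1"
  obtains S where
    "\<And>u. (\<lambda>k::int. \<bar>\<phi> (u - of_int k)\<bar> * (1 + \<bar>u - of_int k\<bar>) ^ r) summable_on UNIV"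
    "\<And>u. (\<Sum>\<^sub>\<infinity>k::int. \<bar>\<phi> (u - of_int k)\<bar> * (1 + \<bar>u - of_int k\<bar>) ^ r) \<le> S"
proof -
  obtain B where B: "\<And>v. \<bar>\<phi> v\<bar> \<le> B"
    using assms(1) unfolding discrete_kernel_def bounded_iff by auto
  obtain C where C: "C \<ge> 0"
      "\<And>v. \<bar>\<phi> v\<bar> * (1 + \<bar>v\<bar>) ^ r \<le> C * (1 + \<bar>v\<bar>) powr (-(\<theta> - real r))"
    by (rule cond_Theta_weighted_bound[where r=r, OF assms(2) _ B]) (use \<theta> in auto)
  obtain Z where Z: "Z \<ge> 0"
      "\<And>u. (\<lambda>k::int. (1 + \<bar>u - real_of_int k\<bar>) powr (-(\<theta> - real r))) summable_on UNIV"
      "\<And>u. (\<Sum>\<^sub>\<infinity>k::int. (1 + \<bar>u - real_of_int k\<bar>) powr (-(\<theta> - real r))) \<le> Z"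
    by (rule int_translates_one_plus_abs_powr[of "\<theta> - real r"]) (use \<theta> in auto)
  have major: "(\<lambda>k::int. C * (1 + \<bar>u - real_of_int k\<bar>) powr (-(\<theta> - real r))) summable_on UNIV" for u
    by (intro summable_on_cmult_right Z(2))
  have summable: "(\<lambda>k::int. \<bar>\<phi> (u - of_int k)\<bar> * (1 + \<bar>u - of_int k\<bar>) ^ r) summable_on UNIV" for u
    by (rule summable_on_comparison_test[OF major[of u] C(2)]) simp
  show ?thesis
  proof (rule that[OF summable])
    fix u
    have "(\<Sum>\<^sub>\<infinity>k::int. \<bar>\<phi> (u - of_int k)\<bar> * (1 + \<bar>u - of_int k\<bar>) ^ r)
        \<le> (\<Sum>\<^sub>\<infinity>k::int. C * (1 + \<bar>u - real_of_int k\<bar>) powr (-(\<theta> - real r)))"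
      by (rule infsum_mono[OF summable major]) (rule C(2))
    also have "\<dots> \<le> C * Z"
      by (subst infsum_cmult_right') (intro mult_left_mono Z(3) C(1))
    finally show "(\<Sum>\<^sub>\<infinity>k::int. \<bar>\<phi> (u - of_int k)\<bar> * (1 + \<bar>u - of_int k\<bar>) ^ r) \<le> C * Z" .
  qed
qed

text \<open>\<open>\<psi>\<close> is only bounded near \<open>0\<close>: on \<open>[-M, M]\<close> the weight is at most \<open>(1 + M)\<^sup>r\<close> and \<open>\<psi>\<close> is integrable.\<close>
lemma continuous_kernel_weighted_integrable:
  assumes "continuous_kernel \<psi>" and "cond_Theta \<theta> \<psi>" and "\<theta> > real r + 1"
  shows "integrable lborel (\<lambda>v. \<bar>\<psi> v\<bar> * (1 + \<bar>v\<bar>) ^ r)"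
proof -
  define \<alpha> where "\<alpha> = \<theta> - real r"
  have \<psi>: "integrable lborel \<psi>" using assms(1) unfolding continuous_kernel_def by auto
  obtain C M where M: "M \<ge> 1" "C \<ge> 0"
      "\<And>v. \<bar>v\<bar> > M \<Longrightarrow> \<bar>\<psi> v\<bar> * (1 + \<bar>v\<bar>) ^ r \<le> C * (1 + \<bar>v\<bar>) powr (-\<alpha>)"
    unfolding \<alpha>_def by (rule cond_Theta_weighted_tail[where r=r, OF assms(2)]) (use assms(3) in auto)
  have bound: "\<bar>\<psi> v\<bar> * (1 + \<bar>v\<bar>) ^ r \<le> (1 + M) ^ r * \<bar>\<psi> v\<bar> + C * (1 + \<bar>v\<bar>) powr (-\<alpha>)" for v
  proof (cases "\<bar>v\<bar> > M")
    case True
    then show ?thesis using M(3)[of v] M(1) by (intro add_increasing) auto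
  next
    case False
    then have "\<bar>\<psi> v\<bar> * (1 + \<bar>v\<bar>) ^ r \<le> \<bar>\<psi> v\<bar> * (1 + M) ^ r"
      by (intro mult_left_mono power_mono) auto
    then show ?thesis using M(2) by (simp add: mult.commute add_increasing2)
  qed
  show ?thesis
  proof (rule Bochner_Integration.integrable_bound)
    show "integrable lborel (\<lambda>v. (1 + M) ^ r * \<bar>\<psi> v\<bar> + C * (1 + \<bar>v\<bar>) powr (-\<alpha>))"
      using \<psi> integrable_one_plus_abs_powr[of \<alpha>] assms(3) by (auto simp: \<alpha>_def)
    show "(\<lambda>v. \<bar>\<psi> v\<bar> * (1 + \<bar>v\<bar>) ^ r) \<in> borel_measurable lborel"
      using borel_measurable_integrable[OF \<psi>] by measurable
    show "AE v in lborel. norm (\<bar>\<psi> v\<bar> * (1 + \<bar>v\<bar>) ^ r)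
        \<le> norm ((1 + M) ^ r * \<bar>\<psi> v\<bar> + C * (1 + \<bar>v\<bar>) powr (-\<alpha>))"
    proof (rule AE_I2)
      fix v
      have "0 \<le> (1 + M) ^ r * \<bar>\<psi> v\<bar> + C * (1 + \<bar>v\<bar>) powr (-\<alpha>)" using M by simp
      then show "norm (\<bar>\<psi> v\<bar> * (1 + \<bar>v\<bar>) ^ r)
          \<le> norm ((1 + M) ^ r * \<bar>\<psi> v\<bar> + C * (1 + \<bar>v\<bar>) powr (-\<alpha>))"
        using bound[of v] by simp
    qed
  qed
qed

lemma durrmeyer_moments_if_kernels:
  assumes "r > 0" and \<phi>: "discrete_kernel \<phi>" and \<psi>: "continuous_kernel \<psi>"
    and "cond_i r \<phi>" and "cond_ii r \<phi> \<psi>"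
    and \<theta>: "\<theta> > real r + 1" and "cond_Theta \<theta> \<phi>" and "cond_Theta \<theta> \<psi>"
  shows "\<exists>S. durrmeyer_moments \<phi> \<psi> r S"
proof -
  obtain S where
    "\<And>u. (\<lambda>k::int. \<bar>\<phi> (u - of_int k)\<bar> * (1 + \<bar>u - of_int k\<bar>) ^ r) summable_on UNIV"
    "\<And>u. (\<Sum>\<^sub>\<infinity>k::int. \<bar>\<phi> (u - of_int k)\<bar> * (1 + \<bar>u - of_int k\<bar>) ^ r) \<le> S"
    by (rule discrete_kernel_weighted_translates[OF \<phi> \<open>cond_Theta \<theta> \<phi>\<close> \<theta>]) blast
  moreover have "\<psi> \<in> borel_measurable borel"
    using \<psi> unfolding continuous_kernel_def by (auto dest: borel_measurable_integrable)
  moreover have "cont_moment \<psi> 0 = 1"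
    using \<psi> unfolding continuous_kernel_def cont_moment_def by simp
  ultimately have "durrmeyer_moments \<phi> \<psi> r S"
    using assms continuous_kernel_weighted_integrable[OF \<psi> \<open>cond_Theta \<theta> \<psi>\<close> \<theta>]
      disc_moment_eq_disc_moment_const[OF \<phi> \<open>cond_i r \<phi>\<close>]
    by unfold_locales simp_all
  then show ?thesis ..
qed

theorem theorem3p1:
  fixes r :: nat and \<phi> \<psi> :: "real \<Rightarrow> real" and \<theta> :: real
  assumes "r \<ge> 2"
    and "discrete_kernel \<phi>" and "continuous_kernel \<psi>"
    and "cond_i r \<phi>" and "cond_ii r \<phi> \<psi>"
    and "\<theta> > real r + 1" and "cond_Theta \<theta> \<phi>" and "cond_Theta \<theta> \<psi>"
  shows "\<exists>\<Lambda>>0. \<forall>f\<in>bucont. \<forall>w>0.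
           bounded (range (\<lambda>x. durrmeyer \<phi> \<psi> w f x - f x)) \<and>
           sup_norm (\<lambda>x. durrmeyer \<phi> \<psi> w f x - f x) \<le> \<Lambda> * modsmooth r f (1 / w)"
proof -
  obtain S where "durrmeyer_moments \<phi> \<psi> r S"
    using durrmeyer_moments_if_kernels[OF _ assms(2-8)] assms(1) by auto
  then interpret durrmeyer_moments \<phi> \<psi> r S .
  define \<Lambda> where "\<Lambda> = 1 + P\<psi> * S + 2 ^ r * real r ^ r * P\<psi> * S"
  have "\<Lambda> > 0" using P\<psi>_nonneg S\<phi>_nonneg by (simp add: \<Lambda>_def add_pos_nonneg)
  then show ?thesis
    using durrmeyer_error_le_modsmooth[folded \<Lambda>_def]
    by (intro exI[of _ \<Lambda>] conjI ballI allI impI sup_norm_le) auto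
qed

end
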